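(* Let $G$ be a graph with vertices $v_1,\ldots,v_n$ and let $t\ge 1$ be an integer. Let $G'$ and $\alpha$ be constructed as follows. $V(G')=V_G\cup V_B\cup V_C$, where $V_G=\{g_1,\ldots,g_n\}$ induces a copy of $G$ ($g_ig_j$ an edge iff $v_iv_j\in E(G)$); $V_B=\{b^i_j\mid i,j\in\{1,\ldots,t\}\}$ induces a copy of $B_t$ (with $b^i_j b^{i'}_{j'}$ an edge iff $i\neq i'$ and $j\neq j'$); every vertex of $V_G$ is adjacent to every vertex of $V_B$; and $V_C=C_1\cup\cdots\cup C_{n+t+1}$ where the $C_i$ are pairwise disjoint independent sets, each of size $2t+2t^2$, with no edges between different $C_i$. Further, each $g_i$ is adjacent to all vertices of $V_C\setminus(C_i\cup C_{n+t+1})$ and each vertex of $V_B$ is adjacent to all vertices of $C_{n+t+1}$; there are no other edges. Define $\alpha(g_i)=i$ for $1\le i\le n$, $\alpha(c)=i$ for every $c\in C_i$ ($1\le i\le n+t+1$), and $\alpha(b^i_j)=n+i$. Let $k=n+t+1$ and let $\alpha_0,\ldots,\alpha_\ell$ be a $k$-recoloring sequence of $G'$ with $\alpha_0=\alpha$ and $\ell\le 2t+2t^2$. Then for all $g_i\in V_G$ and all $0\le x\le \ell$, $\alpha_x(g_i)\in\{i,n+t+1\}$, and for all $b\in V_B$ and all $0\le x\le\ell$, $\alpha_x(b)\ne n+t+1$.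
   Context: A $k$-coloring of a graph is a map $V\to\{1,\ldots,k\}$ with adjacent vertices receiving different colors. $\mathcal{C}_k(G)$ is the graph whose vertices are the $k$-colorings of $G$, two adjacent iff they differ on exactly one vertex. A $k$-recoloring sequence of length $m$ is a sequence $\alpha_0,\ldots,\alpha_m$ of $k$-colorings such that consecutive colorings are equal or adjacent in $\mathcal{C}_k(G)$. *)

theory Defs
  imports Main
begin

definition is_coloring :: "'v set \<Rightarrow> ('v \<Rightarrow> 'v \<Rightarrow> bool) \<Rightarrow> nat \<Rightarrow> ('v \<Rightarrow> nat) \<Rightarrow> bool" where
  "is_coloring V adj k f \<longleftrightarrow>
     (\<forall>v\<in>V. f v \<in> {1..k}) \<and> (\<forall>u\<in>V. \<forall>v\<in>V. adj u v \<longrightarrow> f u \<noteq> f v)"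

definition col_adjacent :: "'v set \<Rightarrow> ('v \<Rightarrow> nat) \<Rightarrow> ('v \<Rightarrow> nat) \<Rightarrow> bool" where
  "col_adjacent V f g \<longleftrightarrow> card {v\<in>V. f v \<noteq> g v} = 1"

definition col_equal :: "'v set \<Rightarrow> ('v \<Rightarrow> nat) \<Rightarrow> ('v \<Rightarrow> nat) \<Rightarrow> bool" where
  "col_equal V f g \<longleftrightarrow> (\<forall>v\<in>V. f v = g v)"

definition recoloring_seq ::
  "'v set \<Rightarrow> ('v \<Rightarrow> 'v \<Rightarrow> bool) \<Rightarrow> nat \<Rightarrow> nat \<Rightarrow> (nat \<Rightarrow> 'v \<Rightarrow> nat) \<Rightarrow> bool" where
  "recoloring_seq V adj k m \<alpha> \<longleftrightarrow>
     (\<forall>x\<le>m. is_coloring V adj k (\<alpha> x)) \<and>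
     (\<forall>x<m. col_equal V (\<alpha> x) (\<alpha> (Suc x)) \<or> col_adjacent V (\<alpha> x) (\<alpha> (Suc x)))"

text \<open>GV i = g_i; BV i j = b^i_j; CV i c = the c-th vertex of C_i.\<close>
datatype vert = GV nat | BV nat nat | CV nat nat

definition VG :: "nat \<Rightarrow> vert set" where
  "VG n = {GV i | i. i \<in> {1..n}}"

definition VB :: "nat \<Rightarrow> vert set" where
  "VB t = {BV i j | i j. i \<in> {1..t} \<and> j \<in> {1..t}}"

definition VC :: "nat \<Rightarrow> nat \<Rightarrow> vert set" where
  "VC n t = {CV i c | i c. i \<in> {1..n+t+1} \<and> c \<in> {1..2*t + 2*t^2}}"

definition Gp_verts :: "nat \<Rightarrow> nat \<Rightarrow> vert set" where
  "Gp_verts n t = VG n \<union> VB t \<union> VC n t"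

text \<open>E is the edge relation of G on vertex labels 1..n (v_i is labelled i).\<close>
fun Gp_adj :: "(nat \<Rightarrow> nat \<Rightarrow> bool) \<Rightarrow> nat \<Rightarrow> nat \<Rightarrow> vert \<Rightarrow> vert \<Rightarrow> bool" where
  "Gp_adj E n t (GV i) (GV j) = E i j"
| "Gp_adj E n t (BV i j) (BV i' j') = (i \<noteq> i' \<and> j \<noteq> j')"
| "Gp_adj E n t (GV i) (BV _ _) = True"
| "Gp_adj E n t (BV _ _) (GV i) = True"
| "Gp_adj E n t (GV i) (CV m _) = (m \<noteq> i \<and> m \<noteq> n+t+1)"
| "Gp_adj E n t (CV m _) (GV i) = (m \<noteq> i \<and> m \<noteq> n+t+1)"
| "Gp_adj E n t (BV _ _) (CV m _) = (m = n+t+1)"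
| "Gp_adj E n t (CV m _) (BV _ _) = (m = n+t+1)"
| "Gp_adj E n t (CV _ _) (CV _ _) = False"

fun alpha_init :: "nat \<Rightarrow> vert \<Rightarrow> nat" where
  "alpha_init n (GV i) = i"
| "alpha_init n (CV i _) = i"
| "alpha_init n (BV i j) = n + i"

end

theory Submission
  imports Defs
begin

text \<open>Each step of a recoloring sequence changes at most one vertex, so after \<open>x \<le> \<ell>\<close> steps at
  most \<open>x\<close> vertices differ from \<open>\<alpha>\<close>. If \<open>g\<^sub>i\<close> took a colour \<open>m \<notin> {i, n+t+1}\<close>, or a vertex
  of \<open>V\<^sub>B\<close> took colour \<open>n+t+1\<close>, then all \<open>2t + 2t\<^sup>2\<close> vertices of its neighbour class \<open>C\<^sub>m\<close>, which
  start with colour \<open>m\<close>, would have been recoloured as well: together with the vertex itself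
  that is more than \<open>\<ell>\<close> changes.\<close>

lemma card_recolored_le:
  assumes "finite V" and "recoloring_seq V adj k m \<alpha>" and "x \<le> m"
  shows "card {v\<in>V. \<alpha> x v \<noteq> \<alpha> 0 v} \<le> x"
  using \<open>x \<le> m\<close>
proof (induction x)
  case 0
  then show ?case by simp
next
  case (Suc x)
  let ?step = "{v\<in>V. \<alpha> x v \<noteq> \<alpha> (Suc x) v}"
  have "col_equal V (\<alpha> x) (\<alpha> (Suc x)) \<or> col_adjacent V (\<alpha> x) (\<alpha> (Suc x))"
    using assms(2) Suc.prems unfolding recoloring_seq_def by simp
  then have step: "card ?step \<le> 1"
    unfolding col_equal_def col_adjacent_def
    by (metis (mono_tags, lifting) card.empty empty_Collect_eq order_refl zero_le)
  have "{v\<in>V. \<alpha> (Suc x) v \<noteq> \<alpha> 0 v} \<subseteq> {v\<in>V. \<alpha> x v \<noteq> \<alpha> 0 v} \<union> ?step" by auto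
  then have "card {v\<in>V. \<alpha> (Suc x) v \<noteq> \<alpha> 0 v} \<le> card ({v\<in>V. \<alpha> x v \<noteq> \<alpha> 0 v} \<union> ?step)"
    by (rule card_mono[rotated]) (use assms(1) in simp)
  also have "\<dots> \<le> card {v\<in>V. \<alpha> x v \<noteq> \<alpha> 0 v} + card ?step" by (rule card_Un_le)
  also have "\<dots> \<le> Suc x" using Suc step by simp
  finally show ?case .
qed

lemma recolored_vertex_neighbourhood_bound:
  assumes fin: "finite V" and seq: "recoloring_seq V adj k m \<alpha>" and x: "x \<le> m"
    and w: "w \<in> V" "\<alpha> x w \<noteq> \<alpha> 0 w" "w \<notin> S"
    and S: "S \<subseteq> V" "\<forall>s\<in>S. adj w s \<and> \<alpha> 0 s = \<alpha> x w"
  shows "card S < x"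
proof -
  have "is_coloring V adj k (\<alpha> x)" using seq x unfolding recoloring_seq_def by blast
  then have "\<alpha> x s \<noteq> \<alpha> 0 s" if "s \<in> S" for s
    using that S w(1) unfolding is_coloring_def by (metis subsetD)
  then have "insert w S \<subseteq> {v\<in>V. \<alpha> x v \<noteq> \<alpha> 0 v}" using w S(1) by auto
  then have "card (insert w S) \<le> card {v\<in>V. \<alpha> x v \<noteq> \<alpha> 0 v}"
    by (rule card_mono[rotated]) (use fin in simp)
  also have "\<dots> \<le> x" by (rule card_recolored_le[OF fin seq x])
  finally show ?thesis using w(3) finite_subset[OF S(1) fin] by simp
qed

definition C_class :: "nat \<Rightarrow> nat \<Rightarrow> vert set" where
  "C_class t m = CV m ` {1..2*t + 2*t^2}"

lemma mem_C_class_iff: "v \<in> C_class t m \<longleftrightarrow> (\<exists>j\<in>{1..2*t + 2*t^2}. v = CV m j)"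
  unfolding C_class_def by auto

lemma card_C_class: "card (C_class t m) = 2*t + 2*t^2"
  unfolding C_class_def by (subst card_image) (auto simp: inj_on_def)

lemma C_class_subset_Gp_verts: "m \<in> {1..n+t+1} \<Longrightarrow> C_class t m \<subseteq> Gp_verts n t"
  unfolding C_class_def Gp_verts_def VC_def by auto

lemma finite_Gp_verts: "finite (Gp_verts n t)"
proof -
  have "VG n = GV ` {1..n}" unfolding VG_def by auto
  moreover have "VB t = case_prod BV ` ({1..t} \<times> {1..t})" unfolding VB_def by auto
  moreover have "VC n t = case_prod CV ` ({1..n+t+1} \<times> {1..2*t + 2*t^2})" unfolding VC_def by auto
  ultimately show ?thesis unfolding Gp_verts_def by simp
qed

lemma Gp_recolor_into_complete_class_impossible:
  assumes seq: "recoloring_seq (Gp_verts n t) (Gp_adj E n t) (n + t + 1) l \<alpha>"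
    and init: "\<forall>v\<in>Gp_verts n t. \<alpha> 0 v = alpha_init n v"
    and len: "l \<le> 2*t + 2*t^2" and "x \<le> l"
    and w: "w \<in> Gp_verts n t" "\<alpha> x w \<noteq> alpha_init n w" "w \<notin> C_class t (\<alpha> x w)"
    and adj: "\<forall>c\<in>C_class t (\<alpha> x w). Gp_adj E n t w c"
  shows False
proof -
  have "is_coloring (Gp_verts n t) (Gp_adj E n t) (n + t + 1) (\<alpha> x)"
    using seq \<open>x \<le> l\<close> unfolding recoloring_seq_def by blast
  then have C_sub: "C_class t (\<alpha> x w) \<subseteq> Gp_verts n t"
    using C_class_subset_Gp_verts w(1) unfolding is_coloring_def by blast
  have "\<forall>c\<in>C_class t (\<alpha> x w). Gp_adj E n t w c \<and> \<alpha> 0 c = \<alpha> x w"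
    using adj init C_sub unfolding C_class_def by auto
  then have "card (C_class t (\<alpha> x w)) < x"
    using recolored_vertex_neighbourhood_bound[OF finite_Gp_verts seq \<open>x \<le> l\<close> w(1) _ w(3) C_sub]
      w(1,2) init by simp
  then show False using card_C_class len \<open>x \<le> l\<close> by (metis leD le_trans)
qed

text \<open>The counting argument uses no property of \<open>G\<close> or of \<open>t\<close>.\<close>

theorem mainTheorem2:
  fixes E :: "nat \<Rightarrow> nat \<Rightarrow> bool" and n t l :: nat and \<alpha> :: "nat \<Rightarrow> vert \<Rightarrow> nat"
  assumes E_sym: "\<forall>i j. E i j \<longrightarrow> E j i"
    and E_irrefl: "\<forall>i. \<not> E i i"
    and t_pos: "t \<ge> 1"
    and seq: "recoloring_seq (Gp_verts n t) (Gp_adj E n t) (n + t + 1) l \<alpha>"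
    and init: "\<forall>v\<in>Gp_verts n t. \<alpha> 0 v = alpha_init n v"
    and len: "l \<le> 2*t + 2*t^2"
  shows "(\<forall>i\<in>{1..n}. \<forall>x\<le>l. \<alpha> x (GV i) \<in> {i, n+t+1}) \<and>
         (\<forall>b\<in>VB t. \<forall>x\<le>l. \<alpha> x b \<noteq> n+t+1)"
proof (intro conjI ballI allI impI)
  fix i x assume "i \<in> {1..n}" "x \<le> l"
  then have g: "GV i \<in> Gp_verts n t" unfolding Gp_verts_def VG_def by auto
  show "\<alpha> x (GV i) \<in> {i, n+t+1}"
  proof (rule ccontr)
    assume "\<alpha> x (GV i) \<notin> {i, n+t+1}"
    then have "\<alpha> x (GV i) \<noteq> alpha_init n (GV i)"
      and "\<forall>c\<in>C_class t (\<alpha> x (GV i)). Gp_adj E n t (GV i) c"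
      by (auto simp: mem_C_class_iff)
    then show False
      using Gp_recolor_into_complete_class_impossible[OF seq init len \<open>x \<le> l\<close> g]
      by (simp add: mem_C_class_iff)
  qed
next
  fix b x assume "b \<in> VB t" "x \<le> l"
  then obtain p q where b: "b = BV p q" "b \<in> Gp_verts n t" "p \<le> t"
    unfolding VB_def Gp_verts_def by auto
  show "\<alpha> x b \<noteq> n+t+1"
  proof
    assume "\<alpha> x b = n+t+1"
    then have "\<alpha> x b \<noteq> alpha_init n b" and "\<forall>c\<in>C_class t (\<alpha> x b). Gp_adj E n t b c"
      using b by (auto simp: mem_C_class_iff)
    then show False
      using Gp_recolor_into_complete_class_impossible[OF seq init len \<open>x \<le> l\<close> b(2)] b(1)
      by (simp add: mem_C_class_iff)
  qed
qed

end
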